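(* Let $n\ge 2$ and let $x=(x_1,\dots,x_n)$, $y=(y_1,\dots,y_n)$, $w=(w_1,\dots,w_n)$ be three bases of the free group $F_n$. Suppose there exists $v\in F_n$ such that $x_i=vw_iv^{-1}$ for all $i\in\{1,\dots,n\}$. Then $|v|_y\le |w|_y^2\,|y|_x$.
   Context: For a basis $x$ of $F_n$ and $u\in F_n$, $|u|_x$ denotes the length of the reduced word representing $u$ in the basis $x$. For two bases $x,y$ of $F_n$, $|y|_x=\max_i |y_i|_x$ is the maximal length of an element of $y$ written in the basis $x$. *)

theory Defs
  imports Main
begin

text \<open>The free group F_n is modelled concretely as the set of freely reduced
words over the letters (i, e) with i < n; e = False means the generator a_i,
e = True means its inverse.\<close>

type_synonym letter = "nat \<times> bool"
type_synonym word = "letter list"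

definition inv_letter :: "letter \<Rightarrow> letter" where
  "inv_letter a = (fst a, \<not> snd a)"

fun reduced :: "word \<Rightarrow> bool" where
  "reduced (a # b # w) = (b \<noteq> inv_letter a \<and> reduced (b # w))"
| "reduced _ = True"

fun cons_red :: "letter \<Rightarrow> word \<Rightarrow> word" where
  "cons_red a [] = [a]"
| "cons_red a (b # w) = (if b = inv_letter a then w else a # b # w)"

definition fmult :: "word \<Rightarrow> word \<Rightarrow> word" where
  "fmult u v = foldr cons_red u v"

definition finv :: "word \<Rightarrow> word" where
  "finv u = rev (map inv_letter u)"

definition F :: "nat \<Rightarrow> word set" where
  "F n = {w. reduced w \<and> (\<forall>a\<in>set w. fst a < n)}"

fun eval :: "(nat \<Rightarrow> word) \<Rightarrow> word \<Rightarrow> word" where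
  "eval y [] = []"
| "eval y (a # w) = fmult (if snd a then finv (y (fst a)) else y (fst a)) (eval y w)"

text \<open>y is a basis of F_n iff the endomorphism a_i \<mapsto> y_i is an automorphism.\<close>
definition basis :: "nat \<Rightarrow> (nat \<Rightarrow> word) \<Rightarrow> bool" where
  "basis n y \<longleftrightarrow> (\<forall>i<n. y i \<in> F n) \<and> bij_betw (eval y) (F n) (F n)"

definition wlen :: "nat \<Rightarrow> (nat \<Rightarrow> word) \<Rightarrow> word \<Rightarrow> nat" where
  "wlen n y u = length (THE w. w \<in> F n \<and> eval y w = u)"

definition blen :: "nat \<Rightarrow> (nat \<Rightarrow> word) \<Rightarrow> (nat \<Rightarrow> word) \<Rightarrow> nat" where
  "blen n y z = Max {wlen n y (z i) | i. i < n}"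

end

theory Submission
  imports Defs
begin

(*
  Write v = u(y) with u the reduced y-word of v, so |v|_y = |u|.
  Pick a generator index i different from the letter starting u (possible as n \<ge> 2).
  Write y_i as an x-word P of length \<le> |y|_x, and each w_j as a y-word Q_j of
  length \<le> |w|_y.  Since x_j = v w_j v^-1, substituting gives
  y_i = v R(y) v^-1 for the y-word R = P[a_j := Q_j] of length \<le> |y|_x |w|_y.
  Hence u^-1 a_i u and R represent the same element in the basis y; by
  injectivity of the coordinates, the reduced form of u^-1 a_i u is that of R.
  By the choice of i the word u^-1 a_i u is already reduced, so
  2|u| + 1 \<le> |y|_x |w|_y, which is even sharper than |v|_y \<le> |w|_y^2 |y|_x.
*)

section \<open>Free reduction\<close>

definition red :: "word \<Rightarrow> word" where "red p = foldr cons_red p []"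

lemma inv_inv[simp]: "inv_letter (inv_letter a) = a"
  by (simp add: inv_letter_def)

lemma inv_neq[simp]: "inv_letter a \<noteq> a"
  by (cases a) (simp add: inv_letter_def)

lemma fst_inv[simp]: "fst (inv_letter a) = fst a"
  by (simp add: inv_letter_def)

lemma reduced_tl: "reduced (b # w) \<Longrightarrow> reduced w"
  by (cases w) auto

lemma reduced_cons_red: "reduced w \<Longrightarrow> reduced (cons_red a w)"
  by (cases w) (auto dest: reduced_tl)

lemma reduced_foldr: "reduced w \<Longrightarrow> reduced (foldr cons_red p w)"
  by (induction p) (auto intro: reduced_cons_red)

lemma reduced_red: "reduced (red p)"
  unfolding red_def by (rule reduced_foldr) simp

lemma red_reduced: "reduced w \<Longrightarrow> red w = w"
proof (induction w rule: reduced.induct)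
  case (1 a b w)
  then show ?case by (auto simp: red_def)
qed (auto simp: red_def)

lemma red_idem[simp]: "red (red p) = red p"
  by (simp add: red_reduced reduced_red)

lemma red_Nil[simp]: "red [] = []"
  by (simp add: red_def)

lemma red_Cons: "red (a # p) = cons_red a (red p)"
  by (simp add: red_def)

lemma red_app: "red (p @ q) = foldr cons_red p (red q)"
  by (simp add: red_def)

lemma cons_red_cancel: "reduced z \<Longrightarrow> cons_red a (cons_red (inv_letter a) z) = z"
proof (cases z)
  case (Cons b w)
  assume "reduced z"
  with Cons show ?thesis by (cases "b = a"; cases w) auto
qed simp

lemma foldr_cons_red: "reduced w \<Longrightarrow>
   foldr cons_red (cons_red a r) w = cons_red a (foldr cons_red r w)"
proof (cases r)
  case (Cons b r')
  assume w: "reduced w"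
  show ?thesis
  proof (cases "b = inv_letter a")
    case True
    then show ?thesis using Cons cons_red_cancel[OF reduced_foldr[OF w, of r'], of a] by simp
  qed (use Cons in simp)
qed simp

lemma foldr_red: "reduced w \<Longrightarrow> foldr cons_red (red p) w = foldr cons_red p w"
  by (induction p) (simp_all add: red_Cons foldr_cons_red)

lemma red_left: "red (red p @ q) = red (p @ q)"
  by (simp add: red_app foldr_red reduced_red)

lemma red_right: "red (p @ red q) = red (p @ q)"
  by (simp add: red_app red_reduced reduced_red)

lemma red_mid: "red (a @ red b @ c) = red (a @ b @ c)"
  by (metis red_app red_left)

lemma red_both: "red (p @ q) = red (red p @ red q)"
  by (simp add: red_left red_right)

lemma red3: "red (a @ b @ c) = red (red a @ red b @ red c)"
  by (metis append_assoc red_both red_right)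

lemma red_cons_red: "red (cons_red c z) = red (c # z)"
proof (cases z)
  case (Cons b w)
  then show ?thesis
    by (cases "b = inv_letter c") (auto simp: red_Cons cons_red_cancel reduced_red)
qed (simp add: red_Cons)

lemma red_foldr: "red (foldr cons_red a b) = red (a @ b)"
proof (induction a)
  case (Cons x a)
  have "red (foldr cons_red (x # a) b) = red ([x] @ red (foldr cons_red a b))"
    using red_right[of "[x]"] by (simp add: red_cons_red)
  also have "\<dots> = red ([x] @ (a @ b))" using Cons red_right[of "[x]"] by simp
  finally show ?case by simp
qed simp

lemma red_fmult: "red (fmult a b) = red (a @ b)"
  by (simp add: fmult_def red_foldr)

lemma red_fmult_conj: "red (fmult a (fmult b c)) = red (a @ b @ c)"
  by (metis red_fmult red_right)

lemma finv_Nil[simp]: "finv [] = []"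
  by (simp add: finv_def)

lemma finv_Cons: "finv (a # p) = finv p @ [inv_letter a]"
  by (simp add: finv_def)

lemma finv_append: "finv (p @ q) = finv q @ finv p"
  by (simp add: finv_def)

lemma finv_finv[simp]: "finv (finv p) = p"
  by (simp add: finv_def rev_map comp_def)

lemma length_finv[simp]: "length (finv p) = length p"
  by (simp add: finv_def)

lemma set_finv: "set (finv p) = inv_letter ` set p"
  by (simp add: finv_def)

lemma red_finv_right: "red (p @ finv p) = []"
proof (induction p)
  case (Cons a p)
  have "red (p @ finv p @ [inv_letter a]) = [inv_letter a]"
    using red_left[of "p @ finv p" "[inv_letter a]"] Cons by (simp add: red_Cons)
  then show ?case by (simp add: finv_Cons red_Cons)
qed simp

lemma red_finv_left: "red (finv p @ p) = []"
  using red_finv_right[of "finv p"] by simp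

lemma red_finv_red: "red (finv (red q)) = red (finv q)"
proof -
  have "red (finv q) = red (finv q @ red (red q @ finv (red q)))"
    using red_finv_right[of "red q"] by simp
  also have "\<dots> = red (red (finv q @ red q) @ finv (red q))"
    by (simp add: red_right red_left)
  also have "red (finv q @ red q) = []"
    using red_right[of "finv q" q] red_finv_left by simp
  finally show ?thesis by simp
qed

lemma red_conj_cancel: "red (finv v @ red (v @ X @ finv v) @ v) = red X"
proof -
  have "red (finv v @ red (v @ X @ finv v) @ v) = red (red (finv v @ v) @ X @ red (finv v @ v))"
    by (metis append_assoc red_mid red_right red_left)
  then show ?thesis by (simp add: red_finv_left)
qed

lemma length_red: "length (red p) \<le> length p"
proof (induction p)
  case (Cons a p)
  have "length (cons_red a r) \<le> Suc (length r)" for r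
    by (cases r) auto
  then show ?case using Cons by (simp add: red_Cons) (meson le_trans not_less_eq_eq)
qed simp

lemma set_red: "set (red p) \<subseteq> set p"
proof (induction p)
  case (Cons a p)
  have "set (cons_red a r) \<subseteq> insert a (set r)" for r
    by (cases r) auto
  then show ?case using Cons by (auto simp: red_Cons)
qed simp

lemma F_red: "\<forall>a\<in>set p. fst a < n \<Longrightarrow> red p \<in> F n"
  using set_red[of p] reduced_red[of p] by (auto simp: F_def)

lemma reduced_app: "reduced (p @ [a]) \<Longrightarrow> reduced (a # q) \<Longrightarrow> reduced (p @ a # q)"
proof (induction p)
  case (Cons x p)
  then show ?case by (cases p) (auto dest: reduced_tl)
qed simp

lemma reduced_finv: "reduced p \<Longrightarrow> reduced (finv p)"
proof (induction p rule: reduced.induct)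
  case (1 a b w)
  have "reduced (finv w @ inv_letter b # [inv_letter a])"
  proof (rule reduced_app)
    show "reduced (finv w @ [inv_letter b])" using 1 by (simp add: finv_Cons)
    show "reduced (inv_letter b # [inv_letter a])" using 1(2) by auto
  qed
  then show ?case by (simp add: finv_Cons)
qed (auto simp: finv_def)

lemma reduced_conjugate:
  assumes u: "reduced u" and a: "u \<noteq> [] \<Longrightarrow> fst a \<noteq> fst (hd u)"
  shows "reduced (finv u @ a # u)"
proof (cases u)
  case (Cons c u')
  have "a \<noteq> c" "c \<noteq> inv_letter a" using a Cons by (auto simp: inv_letter_def)
  have "reduced (finv u' @ [inv_letter c])"
    using reduced_finv[OF u] Cons by (simp add: finv_Cons)
  then have "reduced ((finv u' @ [inv_letter c]) @ [a])"
    using reduced_app[of "finv u'" "inv_letter c" "[a]"] \<open>a \<noteq> c\<close> by simp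
  moreover have "reduced (a # u)" using u Cons \<open>c \<noteq> inv_letter a\<close> by simp
  ultimately show ?thesis using reduced_app Cons by (fastforce simp: finv_Cons)
qed simp

section \<open>Substitution of words for letters\<close>

definition img :: "(nat \<Rightarrow> word) \<Rightarrow> letter \<Rightarrow> word" where
  "img y a = (if snd a then finv (y (fst a)) else y (fst a))"

definition E :: "(nat \<Rightarrow> word) \<Rightarrow> word \<Rightarrow> word" where
  "E y p = concat (map (img y) p)"

lemma E_Nil[simp]: "E y [] = []"
  by (simp add: E_def)

lemma E_Cons: "E y (a # p) = img y a @ E y p"
  by (simp add: E_def)

lemma E_append: "E y (p @ q) = E y p @ E y q"
  by (simp add: E_def)

lemma eval_E: "eval y p = red (E y p)"
  by (induction p) (simp_all add: E_Cons fmult_def red_app img_def)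

lemma img_inv: "img y (inv_letter a) = finv (img y a)"
  by (simp add: img_def inv_letter_def)

lemma E_finv: "E y (finv p) = finv (E y p)"
  by (induction p) (simp_all add: finv_Cons E_append E_Cons img_inv finv_append)

lemma red_E_cons_red: "red (E y (cons_red a r)) = red (img y a @ E y r)"
proof (cases r)
  case (Cons b r')
  show ?thesis
  proof (cases "b = inv_letter a")
    case True
    have "red (img y a @ E y r) = red (red (img y a @ finv (img y a)) @ E y r')"
      using Cons True by (simp add: E_Cons img_inv red_left)
    then show ?thesis using Cons True by (simp add: red_finv_right)
  qed (use Cons in \<open>simp add: E_Cons\<close>)
qed (simp add: E_Cons)

lemma red_E_red: "red (E y (red p)) = red (E y p)"
proof (induction p)
  case (Cons a p)
  have "red (E y (red (a # p))) = red (img y a @ red (E y (red p)))"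
    by (simp add: red_Cons red_E_cons_red red_right)
  also have "\<dots> = red (img y a @ E y p)" using Cons by (simp add: red_right)
  finally show ?case by (simp add: E_Cons)
qed simp

lemma eval_red: "eval y (red p) = eval y p"
  by (simp add: eval_E red_E_red)

lemma E_resp:
  "\<forall>a\<in>set p. red (z (fst a)) = red (z' (fst a)) \<Longrightarrow> red (E z p) = red (E z' p)"
proof (induction p)
  case (Cons a p)
  have "red (img z a) = red (img z' a)"
    using Cons.prems by (simp add: img_def) (metis red_finv_red)
  with Cons show ?case by (simp add: E_Cons) (metis red_both)
qed simp

lemma E_comp: "E y (E z p) = E (\<lambda>j. E y (z j)) p"
  by (induction p) (simp_all add: E_Cons E_append img_def E_finv)

lemma E_conj: "red (E (\<lambda>j. c @ z j @ finv c) p) = red (c @ E z p @ finv c)"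
proof (induction p)
  case Nil then show ?case by (simp add: red_finv_right)
next
  case (Cons a p)
  have im: "img (\<lambda>j. c @ z j @ finv c) a = c @ img z a @ finv c"
    by (simp add: img_def finv_append)
  have "red (E (\<lambda>j. c @ z j @ finv c) (a # p))
      = red ((c @ img z a @ finv c) @ red (E (\<lambda>j. c @ z j @ finv c) p))"
    by (subst red_right) (simp add: E_Cons im)
  also have "\<dots> = red ((c @ img z a) @ red (finv c @ c) @ E z p @ finv c)"
    using Cons red_right[of "c @ img z a @ finv c" "c @ E z p @ finv c"]
    by (simp only: red_mid) simp
  also have "\<dots> = red (c @ E z (a # p) @ finv c)"
    by (simp add: red_finv_left E_Cons)
  finally show ?case .
qed

lemma E_letters: "\<forall>a\<in>set p. fst a < n \<and> (\<forall>b\<in>set (z (fst a)). fst b < n) \<Longrightarrow>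
   \<forall>b\<in>set (E z p). fst b < n"
  by (induction p) (auto simp: E_Cons img_def set_finv)

lemma E_length: "\<forall>a\<in>set p. length (z (fst a)) \<le> W \<Longrightarrow> length (E z p) \<le> length p * W"
  by (induction p) (auto simp: E_Cons img_def)

section \<open>Coordinates with respect to a basis\<close>

lemma wlen_eval: "basis n y \<Longrightarrow> p \<in> F n \<Longrightarrow> wlen n y (eval y p) = length p"
  unfolding wlen_def basis_def bij_betw_def
  by (rule arg_cong[where f = length], rule the_equality) (auto dest: inj_onD)

lemma basis_representative:
  assumes y: "basis n y" and g: "g \<in> F n"
  obtains p where "p \<in> F n" "eval y p = g" "length p = wlen n y g"
proof -
  have "eval y ` F n = F n" using y unfolding basis_def bij_betw_def by blast
  then obtain p where p: "p \<in> F n" "eval y p = g" using g by (metis imageE)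
  show ?thesis by (rule that[OF p]) (use wlen_eval[OF y p(1)] p(2) in simp)
qed

lemma wlen_le_blen: "i < n \<Longrightarrow> wlen n y (z i) \<le> blen n y z"
  unfolding blen_def by (rule Max_ge) auto

lemma basis_coordinates:
  assumes y: "basis n y" and z: "\<forall>i<n. z i \<in> F n"
  obtains Q where "\<forall>i<n. Q i \<in> F n \<and> eval y (Q i) = z i \<and> length (Q i) \<le> blen n y z"
proof -
  have "\<exists>q. q \<in> F n \<and> eval y q = z i \<and> length q \<le> blen n y z" if i: "i < n" for i
  proof -
    obtain q where "q \<in> F n" "eval y q = z i" "length q = wlen n y (z i)"
      using basis_representative[OF y] z i by blast
    then show ?thesis using wlen_le_blen[OF i, of y z] by auto
  qed
  then show ?thesis using that by metis
qed

lemma eval_eq_imp_red_eq: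
  assumes y: "basis n y" and "\<forall>a\<in>set p. fst a < n" "\<forall>a\<in>set q. fst a < n"
    and eq: "eval y p = eval y q"
  shows "red p = red q"
proof -
  have "red p \<in> F n" "red q \<in> F n" using assms(2,3) by (auto intro: F_red)
  moreover have "eval y (red p) = eval y (red q)" using eq by (simp add: eval_red)
  ultimately show ?thesis using y by (auto simp: basis_def bij_betw_def dest: inj_onD)
qed

section \<open>Conjugation\<close>

lemma conjugate_substitution:
  assumes x: "\<forall>j<n. red (x j) = red (v @ w j @ finv v)"
    and w: "\<forall>j<n. red (w j) = red (E y (Q j))"
    and p: "\<forall>a\<in>set p. fst a < n"
  shows "red (E x p) = red (v @ E y (E Q p) @ finv v)"
proof -
  have "red (E x p) = red (E (\<lambda>j. v @ w j @ finv v) p)"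
    using x p by (intro E_resp) auto
  also have "\<dots> = red (v @ red (E w p) @ finv v)" by (simp add: E_conj red_mid)
  also have "red (E w p) = red (E (\<lambda>j. E y (Q j)) p)"
    using w p by (intro E_resp) auto
  finally show ?thesis by (simp add: E_comp red_mid)
qed

lemma conjugate_coordinates:
  assumes y: "basis n y" and u: "u \<in> F n"
    and q: "\<forall>a\<in>set q. fst a < n" and R: "\<forall>a\<in>set R. fst a < n"
    and eq: "red (E y q) = red (eval y u @ E y R @ finv (eval y u))"
  shows "red (finv u @ q @ u) = red R"
proof (rule eval_eq_imp_red_eq[OF y])
  let ?v = "eval y u"
  have "eval y (finv u @ q @ u) = red (red (finv (E y u)) @ red (E y q) @ red (E y u))"
    by (simp add: eval_E E_append E_finv red3[symmetric])
  also have "\<dots> = red (finv ?v @ red (?v @ E y R @ finv ?v) @ ?v)"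
    by (simp add: eq eval_E red_finv_red red3[of "finv _"])
  also have "\<dots> = eval y R" by (simp add: red_conj_cancel eval_E)
  finally show "eval y (finv u @ q @ u) = eval y R" .
  show "\<forall>a\<in>set (finv u @ q @ u). fst a < n" using u q by (auto simp: F_def set_finv)
qed (rule R)

text \<open>The main estimate: if v = u(y) with u reduced and i is a generator index
  not starting u, then 2|u| + 1 \<le> |y|_x |w|_y.\<close>
lemma conjugator_bound:
  assumes x: "basis n x" and y: "basis n y" and w: "\<forall>j<n. w j \<in> F n"
    and conj: "\<forall>j<n. x j = fmult v (fmult (w j) (finv v))"
    and u: "u \<in> F n" "eval y u = v"
    and i: "i < n" "u \<noteq> [] \<Longrightarrow> i \<noteq> fst (hd u)"
  shows "2 * length u + 1 \<le> blen n x y * blen n y w"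
proof -
  obtain P where P: "\<forall>j<n. P j \<in> F n \<and> eval x (P j) = y j \<and> length (P j) \<le> blen n x y"
    using basis_coordinates[OF x] y by (auto simp: basis_def)
  obtain Q where Q: "\<forall>j<n. Q j \<in> F n \<and> eval y (Q j) = w j \<and> length (Q j) \<le> blen n y w"
    using basis_coordinates[OF y w] .
  define R where "R = E Q (P i)"
  have Pi: "\<forall>a\<in>set (P i). fst a < n" using P i by (auto simp: F_def)
  have yi: "red (E x (P i)) = red (v @ E y R @ finv v)" unfolding R_def
  proof (rule conjugate_substitution[OF _ _ Pi])
    show "\<forall>j<n. red (x j) = red (v @ w j @ finv v)" using conj by (simp add: red_fmult_conj)
    show "\<forall>j<n. red (w j) = red (E y (Q j))"
      using Q w by (simp add: F_def red_reduced eval_E)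
  qed
  have R_letters: "\<forall>a\<in>set R. fst a < n"
    unfolding R_def using Pi Q by (intro E_letters) (auto simp: F_def)
  have "red (finv u @ [(i, False)] @ u) = red R"
    using yi R_letters P i u
    by (intro conjugate_coordinates[OF y u(1)]) (auto simp: E_Cons img_def eval_E)
  moreover have "red (finv u @ [(i, False)] @ u) = finv u @ [(i, False)] @ u"
    using u(1) i by (auto simp: F_def intro!: red_reduced reduced_conjugate)
  moreover have "length R \<le> blen n x y * blen n y w"
    using P Q Pi i unfolding R_def
    by (intro order.trans[OF E_length[of _ _ "blen n y w"]]) (auto simp: mult.commute)
  ultimately show ?thesis using length_red[of R] by simp
qed

theorem lemma2p3:
  fixes n :: nat and x y w :: "nat \<Rightarrow> word" and v :: word
  assumes "n \<ge> 2"
    and "basis n x" and "basis n y" and "basis n w"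
    and "v \<in> F n"
    and "\<forall>i<n. x i = fmult v (fmult (w i) (finv v))"
  shows "wlen n y v \<le> (blen n y w)^2 * blen n x y"
proof -
  obtain u where u: "u \<in> F n" "eval y u = v" "length u = wlen n y v"
    using basis_representative[OF assms(3,5)] .
  define i where "i = (if u \<noteq> [] \<and> fst (hd u) = 0 then 1 else (0::nat))"
  have i: "i < n" "u \<noteq> [] \<Longrightarrow> i \<noteq> fst (hd u)" using assms(1) by (auto simp: i_def)
  have "2 * length u + 1 \<le> blen n x y * blen n y w"
    using conjugator_bound[OF assms(2,3) _ assms(6) u(1,2) i] assms(4)
    by (simp add: basis_def)
  moreover from this have "blen n y w \<ge> 1" by (cases "blen n y w") auto
  then have "blen n x y * blen n y w \<le> (blen n y w)^2 * blen n x y"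
    by (simp add: power2_eq_square)
  ultimately show ?thesis using u(3) by linarith
qed

end
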